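(* For every integer $n\ge 3$, \[ R_n(x)=R(\Gamma_{n-1},x)+x^3R(\Gamma_{n-3},x). \]
   Context: For $n\ge1$ let $\Xi_n$ (the $L$-fence) be the poset on $\{x_1,\dots,x_n\}$ whose cover relations are exactly: $x_2\prec x_1$, $x_3\prec x_2$, and for $3\le i\le n-1$, $x_i\prec x_{i+1}$ if $i$ is odd and $x_{i+1}\prec x_i$ if $i$ is even (so $x_1>x_2>x_3<x_4>x_5<x_6>\cdots$, keeping only the relations among elements that exist). A filter of a poset $P$ is a subset $F$ such that $x\in F$, $x\le y$ imply $y\in F$. $\Omega_n$ (the $n$-th matchable Lucas distributive lattice) is the set of filters of $\Xi_n$ ordered by reverse inclusion; $\Omega_0$ is the one-element lattice. The rank of a filter $F\in\Omega_n$ is $n-|F|$, and the rank generating function is $R_n(x)=\sum_{F\in\Omega_n}x^{\,n-|F|}$ (so $R_0(x)=1$). For $m\ge1$ let $Z_m$ be the fence on $\{z_1,\dots,z_m\}$ with cover relations $z_{i+1}\prec z_i$ for odd $i$ and $z_i\prec z_{i+1}$ for even $i$ ($1\le i\le m-1$), i.e. $z_1>z_2<z_3>z_4<\cdots$; $\Gamma_m$ (the Fibonacci cube/lattice) is the lattice of filters of $Z_m$ under reverse inclusion, with $R(\Gamma_m,x)=\sum_{F}x^{\,m-|F|}$ summing over filters $F$ of $Z_m$, and $R(\Gamma_0,x)=1$. *)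

theory Defs
  imports "HOL-Computational_Algebra.Polynomial"
begin

text \<open>Elements x_1..x_n (resp. z_1..z_m) are represented by indices 1..n.
  A pair (a,b) in a cover relation means element a is covered by element b (a < b).\<close>

definition Xi_cover :: "nat \<Rightarrow> (nat \<times> nat) set" where
  "Xi_cover n =
     {(a,b). n \<ge> 2 \<and> a = 2 \<and> b = 1}
   \<union> {(a,b). n \<ge> 3 \<and> a = 3 \<and> b = 2}
   \<union> {(a,b). \<exists>i. 3 \<le> i \<and> i \<le> n - 1 \<and> i + 1 \<le> n \<and>
        ((odd i \<and> a = i \<and> b = i + 1) \<or> (even i \<and> a = i + 1 \<and> b = i))}"

definition Z_cover :: "nat \<Rightarrow> (nat \<times> nat) set" where
  "Z_cover m =
     {(a,b). \<exists>i. 1 \<le> i \<and> i + 1 \<le> m \<and>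
        ((odd i \<and> a = i + 1 \<and> b = i) \<or> (even i \<and> a = i \<and> b = i + 1))}"

definition filters :: "nat \<Rightarrow> (nat \<times> nat) set \<Rightarrow> nat set set" where
  "filters n C = {F. F \<subseteq> {1..n} \<and> (\<forall>x y. x \<in> F \<longrightarrow> (x, y) \<in> C\<^sup>* \<longrightarrow> y \<in> F)}"

definition rank_gen :: "nat \<Rightarrow> (nat \<times> nat) set \<Rightarrow> int poly" where
  "rank_gen n C = (\<Sum>F\<in>filters n C. monom 1 (n - card F))"

definition R_Omega :: "nat \<Rightarrow> int poly" where
  "R_Omega n = rank_gen n (Xi_cover n)"

definition R_Gamma :: "nat \<Rightarrow> int poly" where
  "R_Gamma m = rank_gen m (Z_cover m)"

end

theory Submission
  imports Defs
begin

text \<open>The element \<open>x\<^sub>1\<close> is maximal in \<open>\<Xi>\<^sub>n\<close>, so split the filters by whether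
  they contain it. Removing \<open>x\<^sub>1\<close> leaves the fence \<open>x\<^sub>2 > x\<^sub>3 < x\<^sub>4 > \<dots>\<close>, a copy
  of \<open>Z\<^bsub>n-1\<^esub>\<close> shifted by one, so the filters containing \<open>x\<^sub>1\<close> contribute
  \<open>R(\<Gamma>\<^bsub>n-1\<^esub>)\<close>. A filter avoiding \<open>x\<^sub>1\<close> also avoids \<open>x\<^sub>2 < x\<^sub>1\<close> and
  \<open>x\<^sub>3 < x\<^sub>2\<close>, so it is a filter of \<open>x\<^sub>4 > x\<^sub>5 < \<dots>\<close>, a copy of \<open>Z\<^bsub>n-3\<^esub>\<close>
  shifted by three; the three missing elements raise the rank by three, giving
  \<open>x\<^sup>3 R(\<Gamma>\<^bsub>n-3\<^esub>)\<close>.\<close>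

definition upclosed :: "(nat \<times> nat) set \<Rightarrow> nat set \<Rightarrow> bool" where
  "upclosed C F \<longleftrightarrow> (\<forall>(x, y)\<in>C. x \<in> F \<longrightarrow> y \<in> F)"

lemma upclosedD: "upclosed C F \<Longrightarrow> (x, y) \<in> C \<Longrightarrow> x \<in> F \<Longrightarrow> y \<in> F"
  unfolding upclosed_def by blast

lemma filters_eq_upclosed: "filters n C = {F. F \<subseteq> {1..n} \<and> upclosed C F}"
proof -
  have "(\<forall>x y. x \<in> F \<longrightarrow> (x, y) \<in> C\<^sup>* \<longrightarrow> y \<in> F) \<longleftrightarrow> upclosed C F" for F
  proof
    assume "upclosed C F"
    show "\<forall>x y. x \<in> F \<longrightarrow> (x, y) \<in> C\<^sup>* \<longrightarrow> y \<in> F"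
    proof (intro allI impI)
      fix x y assume "x \<in> F" "(x, y) \<in> C\<^sup>*"
      from this(2,1) show "y \<in> F"
        by (induction rule: rtrancl_induct) (use \<open>upclosed C F\<close> in \<open>auto simp: upclosed_def\<close>)
    qed
  qed (auto simp: upclosed_def)
  then show ?thesis
    unfolding filters_def by blast
qed

lemma finite_filters: "finite (filters n C)"
  unfolding filters_eq_upclosed by (rule finite_subset[of _ "Pow {1..n}"]) auto

lemma finite_if_in_filters: "F \<in> filters n C \<Longrightarrow> finite F"
  unfolding filters_eq_upclosed using finite_subset by blast

lemma card_le_if_in_filters: "F \<in> filters n C \<Longrightarrow> card F \<le> n"
  unfolding filters_eq_upclosed using card_mono[of "{1..n}" F] by auto

lemma upclosed_Un_iff:
  assumes "F \<subseteq> H" "L \<inter> H = {}"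
    and "\<forall>(a, b)\<in>C - H \<times> H. a \<in> L \<union> H \<longrightarrow> b \<in> L"
  shows "upclosed C (L \<union> F) \<longleftrightarrow> upclosed (Restr C H) F"
  using assms unfolding upclosed_def by blast

definition shift_rel :: "nat \<Rightarrow> (nat \<times> nat) set \<Rightarrow> (nat \<times> nat) set" where
  "shift_rel k C = map_prod ((+) k) ((+) k) ` C"

lemma upclosed_shift_rel_image: "upclosed (shift_rel k C) ((+) k ` G) \<longleftrightarrow> upclosed C G"
proof -
  have "k + a \<in> (+) k ` G \<longleftrightarrow> a \<in> G" for a
    by auto
  then show ?thesis
    unfolding upclosed_def shift_rel_def by (simp add: case_prod_beta)
qed

lemma image_shift_filters:
  "(`) ((+) k) ` filters m C = {F. F \<subseteq> {k<..k + m} \<and> upclosed (shift_rel k C) F}"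
proof (intro set_eqI iffI)
  fix F assume "F \<in> (`) ((+) k) ` filters m C"
  then show "F \<in> {F. F \<subseteq> {k<..k + m} \<and> upclosed (shift_rel k C) F}"
    by (auto simp: filters_eq_upclosed upclosed_shift_rel_image)
next
  fix F assume "F \<in> {F. F \<subseteq> {k<..k + m} \<and> upclosed (shift_rel k C) F}"
  then have F: "F \<subseteq> {k<..k + m}" "upclosed (shift_rel k C) F"
    by auto
  define G where "G = (\<lambda>x. x - k) ` F"
  have F_eq: "F = (+) k ` G"
    using F(1) by (force simp: G_def image_image)
  have "G \<subseteq> {1..m}"
    using F(1) by (force simp: G_def)
  moreover have "upclosed C G"
    using F(2) upclosed_shift_rel_image by (metis F_eq)
  ultimately show "F \<in> (`) ((+) k) ` filters m C"
    using F_eq by (auto simp: filters_eq_upclosed)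
qed

lemma Z_cover_iff:
  "(a, b) \<in> Z_cover m \<longleftrightarrow>
     1 \<le> a \<and> 1 \<le> b \<and> a \<le> m \<and> b \<le> m \<and> (even a \<and> b = a + 1 \<or> odd b \<and> a = b + 1)"
  unfolding Z_cover_def by auto

lemma Xi_cover_iff:
  "(a, b) \<in> Xi_cover n \<longleftrightarrow> (a, b) = (2, 1) \<and> 2 \<le> n \<or>
     2 \<le> a \<and> 2 \<le> b \<and> a \<le> n \<and> b \<le> n \<and> (odd a \<and> b = a + 1 \<or> even b \<and> a = b + 1)"
    (is "_ \<longleftrightarrow> ?top \<or> ?fence")
proof
  assume "(a, b) \<in> Xi_cover n"
  then show "?top \<or> ?fence"
    unfolding Xi_cover_def by auto
next
  assume "?top \<or> ?fence"
  then show "(a, b) \<in> Xi_cover n"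
  proof (elim disjE conjE)
    assume "odd a" "2 \<le> a" "b = a + 1" "b \<le> n"
    moreover from this have "3 \<le> a"
      by (cases "a = 2") auto
    ultimately show ?thesis
      unfolding Xi_cover_def by force
  next
    assume "even b" "2 \<le> b" "a = b + 1" "a \<le> n"
    moreover from this have "b = 2 \<or> 4 \<le> b"
      by (cases "b = 3") auto
    ultimately show ?thesis
      unfolding Xi_cover_def by force
  qed (auto simp: Xi_cover_def)
qed

lemma Restr_Xi_cover_above:
  assumes "odd k"
  shows "Restr (Xi_cover n) {k<..} = shift_rel k (Z_cover (n - k))"
proof (intro set_eqI iffI)
  fix p assume p: "p \<in> Restr (Xi_cover n) {k<..}"
  then obtain c d where "p = (k + c, k + d)" "0 < c" "0 < d"
    by (metis IntD2 SigmaE greaterThan_iff less_imp_add_positive)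
  with p assms have "p = map_prod ((+) k) ((+) k) (c, d)" "(c, d) \<in> Z_cover (n - k)"
    by (auto simp: Xi_cover_iff Z_cover_iff)
  then show "p \<in> shift_rel k (Z_cover (n - k))"
    unfolding shift_rel_def by blast
next
  fix p assume "p \<in> shift_rel k (Z_cover (n - k))"
  then obtain c d where p: "p = (k + c, k + d)" and "(c, d) \<in> Z_cover (n - k)"
    unfolding shift_rel_def by auto
  then show "p \<in> Restr (Xi_cover n) {k<..}"
    using assms by (auto simp: Z_cover_iff Xi_cover_iff)
qed

lemma Xi_cover_above_stays_above:
  assumes "(a, b) \<in> Xi_cover n" "odd k" "k < a"
  shows "k < b \<or> (a, b) = (2, 1)"
  using assms by (auto simp: Xi_cover_iff less_Suc_eq)

lemma Xi_filters_containing_1: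
  assumes "1 \<le> n"
  shows "{F \<in> filters n (Xi_cover n). 1 \<in> F} =
    insert 1 ` (`) ((+) 1) ` filters (n - 1) (Z_cover (n - 1))"
proof -
  have upper: "insert 1 F \<in> filters n (Xi_cover n) \<longleftrightarrow> upclosed (shift_rel 1 (Z_cover (n - 1))) F"
    if "F \<subseteq> {1<..n}" for F
  proof -
    have "upclosed (Xi_cover n) ({1} \<union> F) \<longleftrightarrow> upclosed (Restr (Xi_cover n) {1<..}) F"
      using that Xi_cover_above_stays_above[of _ _ n 1] by (intro upclosed_Un_iff) (auto simp: Xi_cover_iff)
    then show ?thesis
      using that assms by (auto simp: filters_eq_upclosed Restr_Xi_cover_above)
  qed
  have "{F \<in> filters n (Xi_cover n). 1 \<in> F} =
      insert 1 ` {F. F \<subseteq> {1<..n} \<and> upclosed (shift_rel 1 (Z_cover (n - 1))) F}"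
  proof (intro set_eqI iffI)
    fix F assume F: "F \<in> {F \<in> filters n (Xi_cover n). 1 \<in> F}"
    then have "F = insert 1 (F - {1})" "F - {1} \<subseteq> {1<..n}"
      by (auto simp: filters_eq_upclosed)
    with F upper show "F \<in> insert 1 ` {F. F \<subseteq> {1<..n} \<and> upclosed (shift_rel 1 (Z_cover (n - 1))) F}"
      by (metis (no_types, lifting) image_eqI mem_Collect_eq)
  qed (use upper in auto)
  also have "\<dots> = insert 1 ` (`) ((+) 1) ` filters (n - 1) (Z_cover (n - 1))"
    by (subst image_shift_filters) (use assms in simp)
  finally show ?thesis .
qed

lemma Xi_filters_not_containing_1:
  assumes "3 \<le> n"
  shows "{F \<in> filters n (Xi_cover n). 1 \<notin> F} = (`) ((+) 3) ` filters (n - 3) (Z_cover (n - 3))"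
proof -
  have upper: "F \<in> filters n (Xi_cover n) \<longleftrightarrow> upclosed (shift_rel 3 (Z_cover (n - 3))) F"
    if "F \<subseteq> {3<..n}" for F
  proof -
    have "upclosed (Xi_cover n) ({} \<union> F) \<longleftrightarrow> upclosed (Restr (Xi_cover n) {3<..}) F"
      using that Xi_cover_above_stays_above[of _ _ n 3] by (intro upclosed_Un_iff) auto
    then show ?thesis
      using that by (auto simp: filters_eq_upclosed Restr_Xi_cover_above)
  qed
  have "{F \<in> filters n (Xi_cover n). 1 \<notin> F} =
      {F. F \<subseteq> {3<..n} \<and> upclosed (shift_rel 3 (Z_cover (n - 3))) F}"
  proof (intro set_eqI iffI)
    fix F assume F: "F \<in> {F \<in> filters n (Xi_cover n). 1 \<notin> F}"
    have "(2, 1) \<in> Xi_cover n" "(3, 2) \<in> Xi_cover n"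
      using assms by (auto simp: Xi_cover_iff)
    with F have "2 \<notin> F" "3 \<notin> F"
      by (auto simp: filters_eq_upclosed dest: upclosedD)
    have "F \<subseteq> {3<..n}"
    proof
      fix x assume "x \<in> F"
      with F \<open>2 \<notin> F\<close> \<open>3 \<notin> F\<close> have "x \<in> {1..n}" "x \<notin> {1, 2, 3}"
        by (auto simp: filters_eq_upclosed)
      then show "x \<in> {3<..n}"
        by auto
    qed
    with F upper show "F \<in> {F. F \<subseteq> {3<..n} \<and> upclosed (shift_rel 3 (Z_cover (n - 3))) F}"
      by blast
  qed (use upper in auto)
  also have "\<dots> = (`) ((+) 3) ` filters (n - 3) (Z_cover (n - 3))"
    by (subst image_shift_filters) (use assms in simp)
  finally show ?thesis .
qed

lemma inj_on_image_add: "inj_on ((`) ((+) (k::nat))) X"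
  by (simp add: inj_on_def inj_image_eq_iff)

lemma sum_Xi_filters_containing_1:
  assumes "1 \<le> n"
  shows "(\<Sum>F | F \<in> filters n (Xi_cover n) \<and> 1 \<in> F. monom (1::int) (n - card F)) = R_Gamma (n - 1)"
proof -
  let ?T = "filters (n - 1) (Z_cover (n - 1))"
  have not_1: "1 \<notin> (+) 1 ` G" if "G \<in> ?T" for G
    using that by (auto simp: filters_eq_upclosed)
  have inj: "inj_on (insert 1) ((`) ((+) 1) ` ?T)"
    using not_1 by (auto simp: inj_on_def insert_ident)
  have card: "card (insert 1 ((+) 1 ` G)) = Suc (card G)" if "G \<in> ?T" for G
    using not_1[OF that] finite_if_in_filters[OF that] by (simp add: card_image)
  have "(\<Sum>F | F \<in> filters n (Xi_cover n) \<and> 1 \<in> F. monom (1::int) (n - card F)) =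
      (\<Sum>G\<in>?T. monom 1 (n - card (insert 1 ((+) 1 ` G))))"
    unfolding Xi_filters_containing_1[OF assms]
    by (simp only: sum.reindex[OF inj] sum.reindex[OF inj_on_image_add] comp_def)
  also have "\<dots> = (\<Sum>G\<in>?T. monom 1 (n - 1 - card G))"
  proof (rule sum.cong[OF refl])
    fix G assume "G \<in> ?T"
    then show "monom (1::int) (n - card (insert 1 ((+) 1 ` G))) = monom 1 (n - 1 - card G)"
      using card by simp
  qed
  finally show ?thesis
    by (simp add: R_Gamma_def rank_gen_def)
qed

lemma sum_Xi_filters_not_containing_1:
  assumes "3 \<le> n"
  shows "(\<Sum>F | F \<in> filters n (Xi_cover n) \<and> 1 \<notin> F. monom (1::int) (n - card F)) =
    monom 1 3 * R_Gamma (n - 3)"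
proof -
  let ?T = "filters (n - 3) (Z_cover (n - 3))"
  have "(\<Sum>F | F \<in> filters n (Xi_cover n) \<and> 1 \<notin> F. monom (1::int) (n - card F)) =
      (\<Sum>G\<in>?T. monom 1 (n - card ((+) 3 ` G)))"
    unfolding Xi_filters_not_containing_1[OF assms] by (simp add: sum.reindex inj_on_image_add)
  also have "\<dots> = (\<Sum>G\<in>?T. monom 1 3 * monom 1 (n - 3 - card G))"
  proof (rule sum.cong[OF refl])
    fix G assume "G \<in> ?T"
    then have "card G \<le> n - 3"
      by (rule card_le_if_in_filters)
    with assms show "monom (1::int) (n - card ((+) 3 ` G)) = monom 1 3 * monom 1 (n - 3 - card G)"
      by (simp add: card_image mult_monom)
  qed
  finally show ?thesis
    by (simp add: R_Gamma_def rank_gen_def sum_distrib_left)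
qed

theorem mainTheorem1:
  fixes n :: nat
  assumes "n \<ge> 3"
  shows "R_Omega n = R_Gamma (n - 1) + monom 1 3 * R_Gamma (n - 3)"
proof -
  let ?S = "filters n (Xi_cover n)" and ?r = "\<lambda>F. monom (1::int) (n - card F)"
  have "R_Omega n = sum ?r (?S \<inter> {F. 1 \<in> F}) + sum ?r (?S - {F. 1 \<in> F})"
    unfolding R_Omega_def rank_gen_def by (rule sum.Int_Diff[OF finite_filters])
  moreover have "?S \<inter> {F. 1 \<in> F} = {F \<in> ?S. 1 \<in> F}" "?S - {F. 1 \<in> F} = {F \<in> ?S. 1 \<notin> F}"
    by auto
  ultimately show ?thesis
    using assms sum_Xi_filters_containing_1[of n] sum_Xi_filters_not_containing_1[of n] by simp
qed

end
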